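(* Fix a round $r\ge 0$ and a block $k\in\{0,1,\dots,K\}$ of the algorithm described in the context, and let $w_{\max}=\max_{0\le t\le \tau_k^r-1} w_k^{r,t}$. Suppose Assumptions (A1)–(A3) hold. If $$\eta_k^r \le \frac{1}{2\,\tau_k^r\, L_k\, w_{\max}},$$ then, almost surely, $$\sum_{t=0}^{\tau_k^r-1} w_k^{r,t}\,\mathbb{E}^r\big[\|g_k^{r,t}-g_k^{r,0}\|^2\big] \le 8(\tau_k^r)^3(\eta_k^r)^2L_k^2\,w_{\max}^3\Big(\|\nabla_k F(\Theta^{r,0})\|^2+\sigma_k^2\Big)$$ and $$\sum_{t=0}^{\tau_k^r-1} (w_k^{r,t})^2\,\mathbb{E}^r\big[\|g_k^{r,t}-g_k^{r,0}\|^2\big] \le 8(\tau_k^r)^3(\eta_k^r)^2L_k^2\,w_{\max}^4\Big(\|\nabla_k F(\Theta^{r,0})\|^2+\sigma_k^2\Big).$$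
   Context: Setting. There are blocks $k=0,1,\dots,K$ (block $0$ is the server, blocks $1,\dots,K$ are parties). The global parameter is $\Theta=(\theta_0,\theta_1,\dots,\theta_K)\in\mathbb{R}^V$ with $\theta_k\in\mathbb{R}^{V_k}$, $V=\sum_k V_k$. There are $N$ data samples; for each $i\in\{1,\dots,N\}$ there is a differentiable loss $l_i:\mathbb{R}^V\to\mathbb{R}$ (in the application $l_i(\Theta)=l_i(\theta_0;h_1(\theta_1;x_1^i),\dots,h_K(\theta_K;x_K^i);y^i)$, but only the function of $\Theta$ matters). The objective is $F(\Theta)=\frac1N\sum_{i=1}^N l_i(\Theta)$, and $\nabla_kF$ denotes the partial gradient of $F$ with respect to the block $\theta_k$. For a mini-batch $\mathcal{B}\subseteq\{1,\dots,N\}$, the stochastic partial gradient is $g_k(\Theta;\mathcal{B})=\frac{1}{|\mathcal{B}|}\sum_{i\in\mathcal{B}}\nabla_{\theta_k}l_i(\Theta)$. Assumptions. (A1) Smoothness: there are constants $L<\infty$ and $L_k<\infty$ ($k=0,\dots,K$) such that for all $i$ and all $\Theta_1,\Theta_2\in\mathbb{R}^V$: $\|\nabla_\Theta l_i(\Theta_1)-\nabla_\Theta l_i(\Theta_2)\|\le L\|\Theta_1-\Theta_2\|$ and $\|\nabla_{\theta_k} l_i(\Theta_1)-\nabla_{\theta_k} l_i(\Theta_2)\|\le L_k\|\Theta_1-\Theta_2\|$. (A2) Unbiasedness: for a random mini-batch $\mathcal{B}$ (drawn as in the algorithm) and every fixed $\Theta$, $\mathbb{E}_{\mathcal{B}}[g_k(\Theta;\mathcal{B})]=\nabla_kF(\Theta)$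 for all $k$. (A3) Bounded variance: there are constants $\sigma_k<\infty$ such that for every fixed $\Theta$, $\mathbb{E}_{\mathcal{B}}\|\nabla_kF(\Theta)-g_k(\Theta;\mathcal{B})\|^2\le\sigma_k^2$. Algorithm (Flex-VFL). Given deterministic positive integers $\tau_k^r\ge1$ (number of local iterations of block $k$ in round $r$), step sizes $\eta_k^r>0$, and weights $w_k^{r,t}\ge 1$, and an initial $\Theta^{0,0}$. In each round $r=0,1,\dots$, a mini-batch $\mathcal{B}^r$ is drawn at random, independently of $\mathcal{B}^0,\dots,\mathcal{B}^{r-1}$ (so that (A2), (A3) hold for $\mathcal{B}^r$ conditionally on the past). Write $\Theta^{r,0}=(\theta_0^{r,0},\dots,\theta_K^{r,0})$. For each block $k$ and $t=0,\dots,\tau_k^r-1$: let $\Gamma_k^{r,t}\in\mathbb{R}^V$ be the vector whose block $k$ equals $\theta_k^{r,t}$ and whose block $j\neq k$ equals $\theta_j^{r,0}$; set $g_k^{r,t}=g_k(\Gamma_k^{r,t};\mathcal{B}^r)$ and $\theta_k^{r,t+1}=\theta_k^{r,t}-\eta_k^r\,w_k^{r,t}\,g_k^{r,t}$. Then $\Theta^{r+1,0}=(\theta_0^{r,\tau_0^r},\dots,\theta_K^{r,\tau_K^r})$. In particular $g_k^{r,0}=g_k(\Theta^{r,0};\mathcal{B}^r)$ and $\theta_k^{r,\tau_k^r}=\theta_k^{r,0}-\eta_k^r\sum_{t=0}^{\tau_k^r-1}w_k^{r,t}g_k^{r,t}$. Notation. $\mathbb{E}^r[\cdot]$ denotes expectation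 over the mini-batch $\mathcal{B}^r$ conditioned on $\Theta^{0,0},\Theta^{1,0},\dots,\Theta^{r,0}$. *)

theory Defs
  imports "HOL-Analysis.Analysis" "HOL-Probability.Probability"
begin

text \<open>Coordinates of the global parameter Theta in R^V are indexed by the finite type 'c
  (V = CARD('c)); blk c is the block (0 = server, 1..K = parties) that coordinate c belongs to.
  A block vector theta_k is represented by its zero-padded embedding into R^V (same norm).\<close>

definition blockproj :: "('c::finite \<Rightarrow> nat) \<Rightarrow> nat \<Rightarrow> real^'c \<Rightarrow> real^'c" where
  "blockproj blk k v = (\<chi> c. if blk c = k then v $ c else 0)"

text \<open>Partial gradient of F = (1/N) sum_{i=1..N} l_i with respect to block k;
  gl i Theta is the gradient of l_i at Theta.\<close>
definition partgradF :: "('c::finite \<Rightarrow> nat) \<Rightarrow> nat \<Rightarrow> (nat \<Rightarrow> real^'c \<Rightarrow> real^'c) \<Rightarrow> nat \<Rightarrow> real^'c \<Rightarrow> real^'c" where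
  "partgradF blk N gl k \<Theta> = (1 / real N) *\<^sub>R (\<Sum>i\<in>{1..N}. blockproj blk k (gl i \<Theta>))"

definition stochgrad :: "('c::finite \<Rightarrow> nat) \<Rightarrow> (nat \<Rightarrow> real^'c \<Rightarrow> real^'c) \<Rightarrow> nat \<Rightarrow> real^'c \<Rightarrow> nat set \<Rightarrow> real^'c" where
  "stochgrad blk gl k \<Theta> B = (1 / real (card B)) *\<^sub>R (\<Sum>i\<in>B. blockproj blk k (gl i \<Theta>))"

text \<open>Gamma_k^{r,t}: the vector whose block k is theta_k^{r,t} and whose other blocks equal
  those of Theta^{r,0} = Theta0, for step size eta, weights w t, mini-batch B.
  Since stochgrad only has block-k components, the update only changes block k.\<close>
primrec localiter :: "('c::finite \<Rightarrow> nat) \<Rightarrow> (nat \<Rightarrow> real^'c \<Rightarrow> real^'c) \<Rightarrow> nat \<Rightarrow> real \<Rightarrow> (nat \<Rightarrow> real)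
    \<Rightarrow> real^'c \<Rightarrow> nat set \<Rightarrow> nat \<Rightarrow> real^'c" where
  "localiter blk gl k \<eta> w \<Theta>0 B 0 = \<Theta>0"
| "localiter blk gl k \<eta> w \<Theta>0 B (Suc t) =
     localiter blk gl k \<eta> w \<Theta>0 B t - (\<eta> * w t) *\<^sub>R stochgrad blk gl k (localiter blk gl k \<eta> w \<Theta>0 B t) B"

end

theory Submission
  imports Defs
begin

(* Fix the mini-batch B; the local iteration is then deterministic. With a = L_k eta w_max
   and 2 tau a <= 1, induction on t shows |g^t - g^0| <= 2 a t |g^0|: the iterate moves by
   eta w_s |g^s| per step, and as long as the drift stays below |g^0| every |g^s| is at most
   2 |g^0|. Squaring, splitting |g^0|^2 <= 2 |grad_k F|^2 + 2 |grad_k F - g^0|^2 and taking the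
   expectation over the batch with the variance bound gives 8 a^2 tau^2 (|grad_k F|^2 + sigma_k^2)
   for each t; summing tau terms with weights at most w_max (resp. w_max^2) gives both claims. *)

lemma norm_stochgrad_diff_le:
  assumes "finite B" and "B \<noteq> {}"
    and lip: "\<And>i. i \<in> B \<Longrightarrow>
      norm (blockproj blk k (gl i X) - blockproj blk k (gl i Y)) \<le> c * norm (X - Y)"
  shows "norm (stochgrad blk gl k X B - stochgrad blk gl k Y B) \<le> c * norm (X - Y)"
proof -
  have card_pos: "real (card B) > 0" using assms by (simp add: card_gt_0_iff)
  have "stochgrad blk gl k X B - stochgrad blk gl k Y B
        = (1 / real (card B)) *\<^sub>R (\<Sum>i\<in>B. blockproj blk k (gl i X) - blockproj blk k (gl i Y))"
    by (simp add: stochgrad_def sum_subtractf scaleR_diff_right)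
  hence "norm (stochgrad blk gl k X B - stochgrad blk gl k Y B)
        = (1 / real (card B)) * norm (\<Sum>i\<in>B. blockproj blk k (gl i X) - blockproj blk k (gl i Y))"
    using card_pos by simp
  also have "\<dots> \<le> (1 / real (card B)) * (\<Sum>i\<in>B. c * norm (X - Y))"
    using card_pos by (intro mult_left_mono order.trans[OF norm_sum sum_mono] lip) auto
  also have "\<dots> = c * norm (X - Y)" using card_pos by simp
  finally show ?thesis .
qed

lemma norm_localiter_diff_le:
  assumes "\<eta> \<ge> 0" and "\<And>s. s < t \<Longrightarrow> w s \<ge> 0"
  shows "norm (localiter blk gl k \<eta> w X B t - X)
     \<le> \<eta> * (\<Sum>s<t. w s * norm (stochgrad blk gl k (localiter blk gl k \<eta> w X B s) B))"
  using assms(2)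
proof (induction t)
  case 0
  then show ?case by simp
next
  case (Suc t)
  let ?g = "stochgrad blk gl k (localiter blk gl k \<eta> w X B t) B"
  have "norm (localiter blk gl k \<eta> w X B (Suc t) - X)
      = norm ((localiter blk gl k \<eta> w X B t - X) - (\<eta> * w t) *\<^sub>R ?g)"
    by (simp add: algebra_simps)
  also have "\<dots> \<le> norm (localiter blk gl k \<eta> w X B t - X) + norm ((\<eta> * w t) *\<^sub>R ?g)"
    by (rule norm_triangle_ineq4)
  also have "norm ((\<eta> * w t) *\<^sub>R ?g) = \<eta> * (w t * norm ?g)"
    using Suc.prems[of t] assms(1) by simp
  finally show ?case using Suc by (simp add: distrib_left)
qed

lemma norm_stochgrad_localiter_drift:
  assumes B: "finite B" "B \<noteq> {}"
    and lip: "\<And>i X Y. i \<in> B \<Longrightarrow>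
      norm (blockproj blk k (gl i X) - blockproj blk k (gl i Y)) \<le> c * norm (X - Y)"
    and c: "c \<ge> 0" and \<eta>: "\<eta> \<ge> 0"
    and w: "\<And>s. s < \<tau> \<Longrightarrow> 0 \<le> w s \<and> w s \<le> M"
    and step: "2 * real \<tau> * c * \<eta> * M \<le> 1"
    and "t \<le> \<tau>"
  shows "norm (stochgrad blk gl k (localiter blk gl k \<eta> w \<Theta>0 B t) B - stochgrad blk gl k \<Theta>0 B)
    \<le> 2 * c * \<eta> * M * real t * norm (stochgrad blk gl k \<Theta>0 B)"
  using \<open>t \<le> \<tau>\<close>
proof (induction t rule: less_induct)
  case (less t)
  let ?g = "\<lambda>s. stochgrad blk gl k (localiter blk gl k \<eta> w \<Theta>0 B s) B"
  let ?g\<^sub>0 = "stochgrad blk gl k \<Theta>0 B"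
  have g_le: "w s * norm (?g s) \<le> M * (2 * norm ?g\<^sub>0)" if "s < t" for s
  proof -
    have s: "s < \<tau>" using that less.prems by simp
    have "norm (?g s) \<le> norm (?g s - ?g\<^sub>0) + norm ?g\<^sub>0"
      using norm_triangle_ineq2[of "?g s" ?g\<^sub>0] by linarith
    also have "norm (?g s - ?g\<^sub>0) \<le> 2 * c * \<eta> * M * real s * norm ?g\<^sub>0"
      using less.IH[of s] that s by simp
    also have "2 * c * \<eta> * M * real s \<le> 2 * real \<tau> * c * \<eta> * M"
      using s c \<eta> w[OF s] by (simp add: mult_left_mono mult_ac)
    hence "2 * c * \<eta> * M * real s * norm ?g\<^sub>0 \<le> norm ?g\<^sub>0"
      using step mult_right_mono[of _ 1 "norm ?g\<^sub>0"] by simp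
    finally show ?thesis using w[OF s] by (intro mult_mono) auto
  qed
  have "norm (?g t - ?g\<^sub>0) \<le> c * norm (localiter blk gl k \<eta> w \<Theta>0 B t - \<Theta>0)"
    by (rule norm_stochgrad_diff_le[OF B lip])
  also have "\<dots> \<le> c * (\<eta> * (\<Sum>s<t. w s * norm (?g s)))"
    using less.prems w by (intro mult_left_mono[OF norm_localiter_diff_le c] \<eta>) auto
  also have "\<dots> \<le> c * (\<eta> * (\<Sum>s<t. M * (2 * norm ?g\<^sub>0)))"
    using g_le c \<eta> by (intro mult_left_mono sum_mono) auto
  also have "\<dots> = 2 * c * \<eta> * M * real t * norm ?g\<^sub>0" by simp
  finally show ?case .
qed

lemma power2_norm_le_split: "(norm v)\<^sup>2 \<le> 2 * (norm u)\<^sup>2 + 2 * (norm (u - v))\<^sup>2"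
proof -
  have "norm v \<le> norm u + norm (u - v)"
    using norm_triangle_ineq4[of u "u - v"] by simp
  hence "(norm v)\<^sup>2 \<le> (norm u + norm (u - v))\<^sup>2" by (intro power_mono) auto
  also have "\<dots> \<le> 2 * (norm u)\<^sup>2 + 2 * (norm (u - v))\<^sup>2"
    using zero_le_power2[of "norm u - norm (u - v)"]
    unfolding power2_diff power2_sum by linarith
  finally show ?thesis .
qed

lemma expectation_stochgrad_localiter_drift:
  fixes D :: "nat set pmf"
  assumes fin: "finite (set_pmf D)"
    and batch: "\<And>B. B \<in> set_pmf D \<Longrightarrow> finite B \<and> B \<noteq> {}"
    and lip: "\<And>B i X Y. B \<in> set_pmf D \<Longrightarrow> i \<in> B \<Longrightarrow>
      norm (blockproj blk k (gl i X) - blockproj blk k (gl i Y)) \<le> c * norm (X - Y)"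
    and var: "measure_pmf.expectation D (\<lambda>B. (norm (v - stochgrad blk gl k \<Theta>0 B))\<^sup>2) \<le> \<sigma>\<^sup>2"
    and c: "c \<ge> 0" and \<eta>: "\<eta> \<ge> 0"
    and w: "\<And>s. s < \<tau> \<Longrightarrow> 0 \<le> w s \<and> w s \<le> M"
    and step: "2 * real \<tau> * c * \<eta> * M \<le> 1"
    and t: "t \<le> \<tau>"
  shows "measure_pmf.expectation D (\<lambda>B.
      (norm (stochgrad blk gl k (localiter blk gl k \<eta> w \<Theta>0 B t) B - stochgrad blk gl k \<Theta>0 B))\<^sup>2)
    \<le> 8 * (c * \<eta> * M * real \<tau>)\<^sup>2 * ((norm v)\<^sup>2 + \<sigma>\<^sup>2)"
proof -
  let ?x = "\<lambda>B. norm (stochgrad blk gl k (localiter blk gl k \<eta> w \<Theta>0 B t) B - stochgrad blk gl k \<Theta>0 B)"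
  let ?e = "\<lambda>B. norm (v - stochgrad blk gl k \<Theta>0 B)"
  define b where "b = 2 * c * \<eta> * M * real \<tau>"
  have pointwise: "(?x B)\<^sup>2 \<le> b\<^sup>2 * (2 * (norm v)\<^sup>2 + 2 * (?e B)\<^sup>2)" if "B \<in> set_pmf D" for B
  proof -
    have "2 * c * \<eta> * M * real t \<le> b"
      unfolding b_def using t c \<eta> w[of 0] by (cases "\<tau> = 0") (auto intro!: mult_left_mono)
    hence "2 * c * \<eta> * M * real t * norm (stochgrad blk gl k \<Theta>0 B)
        \<le> b * norm (stochgrad blk gl k \<Theta>0 B)"
      by (rule mult_right_mono) simp
    moreover have "?x B \<le> 2 * c * \<eta> * M * real t * norm (stochgrad blk gl k \<Theta>0 B)"
      by (rule norm_stochgrad_localiter_drift[OF _ _ _ c \<eta> w step t])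
        (use batch[OF that] lip[OF that] in auto)
    ultimately have "?x B \<le> b * norm (stochgrad blk gl k \<Theta>0 B)" by linarith
    hence "(?x B)\<^sup>2 \<le> b\<^sup>2 * (norm (stochgrad blk gl k \<Theta>0 B))\<^sup>2"
      by (metis norm_ge_zero power_mono power_mult_distrib)
    also have "\<dots> \<le> b\<^sup>2 * (2 * (norm v)\<^sup>2 + 2 * (?e B)\<^sup>2)"
      by (intro mult_left_mono[OF power2_norm_le_split] zero_le_power2)
    finally show ?thesis .
  qed
  have "measure_pmf.expectation D (\<lambda>B. (?x B)\<^sup>2)
      \<le> measure_pmf.expectation D (\<lambda>B. b\<^sup>2 * (2 * (norm v)\<^sup>2 + 2 * (?e B)\<^sup>2))"
    by (intro integral_mono_AE integrable_measure_pmf_finite[OF fin])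
      (simp add: AE_measure_pmf_iff pointwise)
  also have "\<dots> = 2 * b\<^sup>2 * (norm v)\<^sup>2 + 2 * b\<^sup>2 * measure_pmf.expectation D (\<lambda>B. (?e B)\<^sup>2)"
    by (simp add: integrable_measure_pmf_finite[OF fin] algebra_simps)
  also have "\<dots> \<le> 2 * b\<^sup>2 * (norm v)\<^sup>2 + 2 * b\<^sup>2 * \<sigma>\<^sup>2"
    using var by (intro add_left_mono mult_left_mono) auto
  also have "\<dots> = 8 * (c * \<eta> * M * real \<tau>)\<^sup>2 * ((norm v)\<^sup>2 + \<sigma>\<^sup>2)"
    unfolding b_def by (simp add: power_mult_distrib algebra_simps)
  finally show ?thesis .
qed

lemma lipschitz_bound_nonneg:
  fixes f :: "'a::real_normed_vector \<Rightarrow> 'b::real_normed_vector"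
  assumes "norm (f x - f y) \<le> c * norm (x - y)" and "x \<noteq> y"
  shows "c \<ge> 0"
proof -
  have "0 \<le> c * norm (x - y)" using assms(1) norm_ge_zero order_trans by blast
  with assms(2) show ?thesis by (simp add: zero_le_mult_iff)
qed

lemma sum_weighted_le:
  fixes w e :: "nat \<Rightarrow> real"
  assumes "\<And>t. t < \<tau> \<Longrightarrow> 0 \<le> w t \<and> w t \<le> M"
    and "\<And>t. t < \<tau> \<Longrightarrow> 0 \<le> e t \<and> e t \<le> C"
  shows "(\<Sum>t<\<tau>. w t ^ p * e t) \<le> real \<tau> * M ^ p * C"
proof -
  have "(\<Sum>t<\<tau>. w t ^ p * e t) \<le> (\<Sum>t<\<tau>. M ^ p * C)"
    using assms by (intro sum_mono mult_mono power_mono) force+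
  then show ?thesis by simp
qed

theorem lemma1:
  fixes blk :: "'c::finite \<Rightarrow> nat" and K N :: nat
    and l :: "nat \<Rightarrow> real^'c \<Rightarrow> real" and gl :: "nat \<Rightarrow> real^'c \<Rightarrow> real^'c"
    and L :: real and Lb :: "nat \<Rightarrow> real" and \<sigma> :: "nat \<Rightarrow> real"
    and D :: "nat set pmf"
    and k \<tau> :: nat and \<eta> :: real and w :: "nat \<Rightarrow> real" and \<Theta>0 :: "real^'c"
  assumes blocks: "\<And>c. blk c \<le> K"
    and N_pos: "N \<ge> 1"
    and grad: "\<And>i \<Theta>. i \<in> {1..N} \<Longrightarrow> (l i has_derivative (\<lambda>h. gl i \<Theta> \<bullet> h)) (at \<Theta>)"
    and A1: "\<And>i \<Theta>1 \<Theta>2. i \<in> {1..N} \<Longrightarrow> norm (gl i \<Theta>1 - gl i \<Theta>2) \<le> L * norm (\<Theta>1 - \<Theta>2)"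
    and A1b: "\<And>i j \<Theta>1 \<Theta>2. i \<in> {1..N} \<Longrightarrow> j \<le> K \<Longrightarrow>
       norm (blockproj blk j (gl i \<Theta>1) - blockproj blk j (gl i \<Theta>2)) \<le> Lb j * norm (\<Theta>1 - \<Theta>2)"
    and batches: "\<And>B. B \<in> set_pmf D \<Longrightarrow> B \<subseteq> {1..N} \<and> B \<noteq> {}"
    and A2: "\<And>j \<Theta>. j \<le> K \<Longrightarrow>
       measure_pmf.expectation D (\<lambda>B. stochgrad blk gl j \<Theta> B) = partgradF blk N gl j \<Theta>"
    and A3: "\<And>j \<Theta>. j \<le> K \<Longrightarrow>
       measure_pmf.expectation D (\<lambda>B. (norm (partgradF blk N gl j \<Theta> - stochgrad blk gl j \<Theta> B))\<^sup>2) \<le> (\<sigma> j)\<^sup>2"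
    and k_le: "k \<le> K"
    and tau_pos: "\<tau> \<ge> 1"
    and eta_pos: "\<eta> > 0"
    and w_ge: "\<And>t. t < \<tau> \<Longrightarrow> w t \<ge> 1"
    and step: "2 * real \<tau> * Lb k * Max (w ` {..<\<tau>}) * \<eta> \<le> 1"
  shows "(\<Sum>t<\<tau>. w t * measure_pmf.expectation D (\<lambda>B.
            (norm (stochgrad blk gl k (localiter blk gl k \<eta> w \<Theta>0 B t) B - stochgrad blk gl k \<Theta>0 B))\<^sup>2))
          \<le> 8 * real \<tau> ^ 3 * \<eta>\<^sup>2 * (Lb k)\<^sup>2 * Max (w ` {..<\<tau>}) ^ 3
             * ((norm (partgradF blk N gl k \<Theta>0))\<^sup>2 + (\<sigma> k)\<^sup>2)
      \<and> (\<Sum>t<\<tau>. (w t)\<^sup>2 * measure_pmf.expectation D (\<lambda>B.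
            (norm (stochgrad blk gl k (localiter blk gl k \<eta> w \<Theta>0 B t) B - stochgrad blk gl k \<Theta>0 B))\<^sup>2))
          \<le> 8 * real \<tau> ^ 3 * \<eta>\<^sup>2 * (Lb k)\<^sup>2 * Max (w ` {..<\<tau>}) ^ 4
             * ((norm (partgradF blk N gl k \<Theta>0))\<^sup>2 + (\<sigma> k)\<^sup>2)"
proof -
  define M where "M = Max (w ` {..<\<tau>})"
  define C where "C = 8 * (Lb k * \<eta> * M * real \<tau>)\<^sup>2
    * ((norm (partgradF blk N gl k \<Theta>0))\<^sup>2 + (\<sigma> k)\<^sup>2)"
  define E where "E t = measure_pmf.expectation D (\<lambda>B.
    (norm (stochgrad blk gl k (localiter blk gl k \<eta> w \<Theta>0 B t) B - stochgrad blk gl k \<Theta>0 B))\<^sup>2)"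
    for t
  have w_bounds: "0 \<le> w t \<and> w t \<le> M" if "t < \<tau>" for t
    using that w_ge[OF that] unfolding M_def by (auto intro: Max_ge)
  have Lb_nonneg: "Lb k \<ge> 0"
    by (rule lipschitz_bound_nonneg[of "\<lambda>\<Theta>. blockproj blk k (gl 1 \<Theta>)" 1 0])
      (use A1b[of 1 k 1 0] N_pos k_le in auto)
  have fin: "finite (set_pmf D)"
    by (rule finite_subset[of _ "Pow {1..N}"]) (use batches in auto)
  have batch: "finite B \<and> B \<noteq> {}" if "B \<in> set_pmf D" for B
    using batches[OF that] finite_subset by blast
  have lip: "norm (blockproj blk k (gl i X) - blockproj blk k (gl i Y)) \<le> Lb k * norm (X - Y)"
    if "B \<in> set_pmf D" "i \<in> B" for B i X Y
    using that batches A1b k_le by blast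
  have "2 * real \<tau> * Lb k * \<eta> * M \<le> 1"
    using step unfolding M_def by (simp add: mult_ac)
  from expectation_stochgrad_localiter_drift[OF fin batch lip A3[OF k_le] Lb_nonneg _ w_bounds this]
  have E_bounds: "0 \<le> E t \<and> E t \<le> C" if "t < \<tau>" for t
    using eta_pos that unfolding C_def E_def by simp
  have sums: "(\<Sum>t<\<tau>. w t ^ p * E t) \<le> real \<tau> * M ^ p * C" for p
    by (rule sum_weighted_le[OF w_bounds E_bounds])
  have "real \<tau> * M ^ 1 * C = 8 * real \<tau> ^ 3 * \<eta>\<^sup>2 * (Lb k)\<^sup>2 * M ^ 3
      * ((norm (partgradF blk N gl k \<Theta>0))\<^sup>2 + (\<sigma> k)\<^sup>2)"
    and "real \<tau> * M ^ 2 * C = 8 * real \<tau> ^ 3 * \<eta>\<^sup>2 * (Lb k)\<^sup>2 * M ^ 4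
      * ((norm (partgradF blk N gl k \<Theta>0))\<^sup>2 + (\<sigma> k)\<^sup>2)"
    unfolding C_def by (simp_all add: power2_eq_square power3_eq_cube power4_eq_xxxx mult_ac)
  with sums[of 1] sums[of 2] show ?thesis unfolding M_def E_def by simp
qed

end
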